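(* Let $\chi_1,\dots,\chi_n,\hbar,q_1,\dots,q_n$ be elements of a commutative ring in which all $1-q_i/q_j$ ($i\neq j$) and $q_j$ are invertible (e.g. indeterminates over $\mathbb C$ in the field of rational functions). Let $M(\chi)$ be the $n\times n$ matrix with $M_{ii}=\chi_i$ and $M_{ij}=\frac{\hbar}{1-q_i/q_j}$ for $i\ne j$, and define $\mathcal E_k(\chi)$ by $\det(y\,1_n+M(\chi))=y^n+\sum_{k=1}^n\mathcal E_k(\chi)y^{n-k}$. Then for every $1\le k\le n$, $$\mathcal E_k(\chi)=\sum_K\sum_\pi J(\pi)V(\pi),$$ where $K$ ranges over all $k$-element subsets of $\{1,\dots,n\}$, $\pi$ ranges over all matchings of $K$ (involutions $\pi:K\to K$, $\pi^2=\mathrm{id}$), and $$J(\pi)=\prod_{i:\pi(i)=i}\chi_i,\qquad V(\pi)=\prod_{i<j,\ \pi(i)=j}\frac{\hbar^2q_iq_j}{(q_i-q_j)^2}.$$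
   Context: In the paper this is applied with $\chi_i=D_{-\mathbf e_i}+\hbar\sum_{a<i}\frac{q_a/q_i}{1-q_a/q_i}-\hbar\sum_{b>i}\frac{q_i/q_b}{1-q_i/q_b}$ in $QH^*_{\hat{\mathbb T}}(T^*\mathcal B)$ for $GL(n)$, but the identity is a formal identity in the stated entries. *)

theory Defs
  imports "Jordan_Normal_Form.Determinant" "HOL-Computational_Algebra.Polynomial"
begin

definition rinv :: "'a::comm_ring_1 \<Rightarrow> 'a" where
  "rinv x = (THE y. x * y = 1)"

text \<open>The matrix M(chi), indices 0..n-1 (standing for 1..n).\<close>
definition Mchi :: "nat \<Rightarrow> 'a::comm_ring_1 \<Rightarrow> (nat \<Rightarrow> 'a) \<Rightarrow> (nat \<Rightarrow> 'a) \<Rightarrow> 'a mat" where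
  "Mchi n hbar q chi = mat n n (\<lambda>(i,j). if i = j then chi i
        else hbar * rinv (1 - q i * rinv (q j)))"

definition detpoly :: "nat \<Rightarrow> 'a::comm_ring_1 \<Rightarrow> (nat \<Rightarrow> 'a) \<Rightarrow> (nat \<Rightarrow> 'a) \<Rightarrow> 'a poly" where
  "detpoly n hbar q chi = det (mat n n (\<lambda>(i,j).
      (if i = j then [:0, 1:] else 0) + [: Mchi n hbar q chi $$ (i,j) :]))"

definition Ecoef :: "nat \<Rightarrow> 'a::comm_ring_1 \<Rightarrow> (nat \<Rightarrow> 'a) \<Rightarrow> (nat \<Rightarrow> 'a) \<Rightarrow> nat \<Rightarrow> 'a" where
  "Ecoef n hbar q chi k = coeff (detpoly n hbar q chi) (n - k)"

definition matchings :: "nat set \<Rightarrow> (nat \<Rightarrow> nat) set" where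
  "matchings K = {\<pi>. (\<forall>i\<in>K. \<pi> i \<in> K \<and> \<pi> (\<pi> i) = i) \<and> (\<forall>i. i \<notin> K \<longrightarrow> \<pi> i = i)}"

definition Jw :: "(nat \<Rightarrow> 'a::comm_ring_1) \<Rightarrow> nat set \<Rightarrow> (nat \<Rightarrow> nat) \<Rightarrow> 'a" where
  "Jw chi K \<pi> = (\<Prod>i\<in>{i\<in>K. \<pi> i = i}. chi i)"

definition Vw :: "'a::comm_ring_1 \<Rightarrow> (nat \<Rightarrow> 'a) \<Rightarrow> nat set \<Rightarrow> (nat \<Rightarrow> nat) \<Rightarrow> 'a" where
  "Vw hbar q K \<pi> = (\<Prod>i\<in>{i\<in>K. i < \<pi> i}.
      hbar^2 * q i * q (\<pi> i) * rinv ((q i - q (\<pi> i))^2))"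

end

theory Submission
  imports Defs
begin

text \<open>Expanding det(y + M) along the diagonal shows that E_k is the sum of the principal minors of
  M of size k. Off the diagonal M_ij = hbar q_j / (q_j - q_i), so for distinct a, i, j the
  partial-fraction identity gives M_ia M_aj = M_ij hbar q_a (g_a(i) - g_a(j)) with
  g_a(i) = 1 / (q_a - q_i). Expanding a principal minor along the row and column of a, the terms
  coming from a permutation p that moves i therefore carry the telescoping factor
  sum_i (g_a(i) - g_a(p i)) = 0, and only the transpositions (a i) survive. What remains is the
  recursion satisfied by the sum over matchings in which a pair {i, j} has weight
  -M_ij M_ji = hbar^2 q_i q_j / (q_i - q_j)^2.\<close>

definition principal_minor :: "(nat \<Rightarrow> nat \<Rightarrow> 'a::comm_ring_1) \<Rightarrow> nat set \<Rightarrow> 'a" where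
  "principal_minor f S = (\<Sum>p\<in>{p. p permutes S}. of_int (sign p) * (\<Prod>i\<in>S. f i (p i)))"

lemma principal_minor_empty [simp]: "principal_minor f {} = 1"
  unfolding principal_minor_def by simp

lemma permutes_iff_fixing_complement:
  assumes "X \<subseteq> A"
  shows "(p permutes A \<and> (\<forall>i\<in>A - X. p i = i)) \<longleftrightarrow> p permutes X"
  using permutes_subset[OF _ assms] permutes_not_in[of p X] unfolding permutes_def by blast

lemma signed_term_transpose_comp:
  fixes f :: "nat \<Rightarrow> nat \<Rightarrow> 'a::comm_ring_1"
  assumes p: "p permutes S" and fin: "finite S" and aS: "a \<notin> S" and i: "i \<in> S"
  shows "of_int (sign (transpose a (p i) \<circ> p)) * (\<Prod>x\<in>insert a S. f x ((transpose a (p i) \<circ> p) x))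
       = - (of_int (sign p) * (f a (p i) * f i a * (\<Prod>x\<in>S - {i}. f x (p x))))"
proof -
  have pa: "p a = a" using permutes_not_in[OF p aS] .
  have pi: "p i \<in> S" using permutes_in_image[OF p] i by simp
  have sign: "sign (transpose a (p i) \<circ> p) = - sign p"
    using sign_compose[OF permutation_swap_id permutes_imp_permutation[OF fin p]] pi aS
    by (auto simp: sign_swap_id)
  have "(\<Prod>x\<in>S - {i}. f x (transpose a (p i) (p x))) = (\<Prod>x\<in>S - {i}. f x (p x))"
  proof (rule prod.cong[OF refl])
    fix x assume x: "x \<in> S - {i}"
    have "p x \<noteq> p i" using inj_onD[OF permutes_inj_on[OF p, of S]] x i by blast
    moreover have "p x \<noteq> a" using permutes_in_image[OF p, of x] x aS by auto
    ultimately show "f x (transpose a (p i) (p x)) = f x (p x)" by simp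
  qed
  then have "(\<Prod>x\<in>insert a S. f x ((transpose a (p i) \<circ> p) x))
      = f a (p i) * (f i a * (\<Prod>x\<in>S - {i}. f x (p x)))"
    using fin aS pa prod.remove[OF fin i, of "\<lambda>x. f x (transpose a (p i) (p x))"] by simp
  then show ?thesis unfolding sign by (simp add: algebra_simps)
qed

lemma principal_minor_insert_cofactor:
  fixes f :: "nat \<Rightarrow> nat \<Rightarrow> 'a::comm_ring_1"
  assumes fin: "finite S" and aS: "a \<notin> S"
  shows "principal_minor f (insert a S) = f a a * principal_minor f S -
    (\<Sum>p\<in>{p. p permutes S}. of_int (sign p) *
       (\<Sum>i\<in>S. f a (p i) * f i a * (\<Prod>x\<in>S - {i}. f x (p x))))"
proof -
  let ?P = "{p. p permutes S}"
  let ?t = "\<lambda>p. of_int (sign p) * (\<Prod>x\<in>insert a S. f x (p x))"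
  have fixing: "?t p = f a a * (of_int (sign p) * (\<Prod>x\<in>S. f x (p x)))" if p: "p permutes S" for p
    using permutes_not_in[OF p aS] fin aS by (simp add: ac_simps)
  have moving: "(\<Sum>b\<in>S. ?t (transpose a b \<circ> p)) =
      - (of_int (sign p) * (\<Sum>i\<in>S. f a (p i) * f i a * (\<Prod>x\<in>S - {i}. f x (p x))))"
    if p: "p permutes S" for p
  proof -
    have "(\<Sum>b\<in>S. ?t (transpose a b \<circ> p)) = (\<Sum>i\<in>S. ?t (transpose a (p i) \<circ> p))"
      using sum.permute[OF p, of "\<lambda>b. ?t (transpose a b \<circ> p)"] by simp
    also have "\<dots> = (\<Sum>i\<in>S. - (of_int (sign p) * (f a (p i) * f i a * (\<Prod>x\<in>S - {i}. f x (p x)))))"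
      by (rule sum.cong[OF refl signed_term_transpose_comp[OF p fin aS]])
    finally show ?thesis by (simp add: sum_negf sum_distrib_left)
  qed
  have "principal_minor f (insert a S) = (\<Sum>b\<in>insert a S. \<Sum>p\<in>?P. ?t (transpose a b \<circ> p))"
    unfolding principal_minor_def by (rule sum_over_permutations_insert[OF fin aS])
  also have "\<dots> = (\<Sum>p\<in>?P. ?t p) + (\<Sum>p\<in>?P. \<Sum>b\<in>S. ?t (transpose a b \<circ> p))"
    using fin aS by (simp add: sum.swap[of _ S])
  also have "(\<Sum>p\<in>?P. ?t p) = f a a * principal_minor f S"
    unfolding principal_minor_def sum_distrib_left by (rule sum.cong[OF refl]) (simp add: fixing)
  also have "(\<Sum>p\<in>?P. \<Sum>b\<in>S. ?t (transpose a b \<circ> p)) = - (\<Sum>p\<in>?P. of_int (sign p) *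
       (\<Sum>i\<in>S. f a (p i) * f i a * (\<Prod>x\<in>S - {i}. f x (p x))))"
    unfolding sum_negf[symmetric] by (rule sum.cong[OF refl], rule moving) simp
  finally show ?thesis by simp
qed

lemma cofactor_sum_eq_fixed_points:
  fixes f :: "nat \<Rightarrow> nat \<Rightarrow> 'a::comm_ring_1"
  assumes p: "p permutes S" and fin: "finite S"
    and cauchy: "\<And>i j. i \<in> S \<Longrightarrow> j \<in> S \<Longrightarrow> i \<noteq> j \<Longrightarrow> f i a * f a j = f i j * (c * (g i - g j))"
  shows "(\<Sum>i\<in>S. f a (p i) * f i a * (\<Prod>x\<in>S - {i}. f x (p x))) =
         (\<Sum>i\<in>S. if p i = i then f a i * f i a * (\<Prod>x\<in>S - {i}. f x (p x)) else 0)"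
proof -
  let ?Q = "\<lambda>i. \<Prod>x\<in>S - {i}. f x (p x)"
  have split: "f a (p i) * f i a * ?Q i = (if p i = i then f a i * f i a * ?Q i else 0)
      + c * (\<Prod>x\<in>S. f x (p x)) * (g i - g (p i))" if i: "i \<in> S" for i
  proof (cases "p i = i")
    case True
    then show ?thesis by simp
  next
    case False
    have "f a (p i) * f i a * ?Q i = f i a * f a (p i) * ?Q i" by (simp only: ac_simps)
    also have "\<dots> = c * (f i (p i) * ?Q i) * (g i - g (p i))"
      using cauchy[of i "p i"] i permutes_in_image[OF p] False by (simp add: ac_simps)
    also have "f i (p i) * ?Q i = (\<Prod>x\<in>S. f x (p x))" by (simp add: prod.remove[OF fin i])
    finally show ?thesis using False by simp
  qed
  have "(\<Sum>i\<in>S. g i - g (p i)) = 0"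
    using sum.permute[OF p, of g] by (simp add: sum_subtractf)
  then have telescoping: "(\<Sum>i\<in>S. c * (\<Prod>x\<in>S. f x (p x)) * (g i - g (p i))) = 0"
    by (simp add: sum_distrib_left[symmetric])
  have "(\<Sum>i\<in>S. f a (p i) * f i a * ?Q i) = (\<Sum>i\<in>S. (if p i = i then f a i * f i a * ?Q i else 0)
      + c * (\<Prod>x\<in>S. f x (p x)) * (g i - g (p i)))"
    by (rule sum.cong[OF refl split])
  also have "\<dots> = (\<Sum>i\<in>S. if p i = i then f a i * f i a * ?Q i else 0)"
    by (simp only: sum.distrib telescoping add_0_right)
  finally show ?thesis .
qed

lemma principal_minor_insert:
  fixes f :: "nat \<Rightarrow> nat \<Rightarrow> 'a::comm_ring_1"
  assumes fin: "finite S" and aS: "a \<notin> S"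
    and cauchy: "\<And>i j. i \<in> S \<Longrightarrow> j \<in> S \<Longrightarrow> i \<noteq> j \<Longrightarrow> f i a * f a j = f i j * (c * (g i - g j))"
  shows "principal_minor f (insert a S) =
    f a a * principal_minor f S - (\<Sum>i\<in>S. f a i * f i a * principal_minor f (S - {i}))"
proof -
  let ?P = "{p. p permutes S}"
  let ?u = "\<lambda>i p. if p i = i then f a i * f i a * (of_int (sign p) * (\<Prod>x\<in>S - {i}. f x (p x))) else 0"
  have "principal_minor f (insert a S) = f a a * principal_minor f S -
      (\<Sum>p\<in>?P. of_int (sign p) * (\<Sum>i\<in>S. f a (p i) * f i a * (\<Prod>x\<in>S - {i}. f x (p x))))"
    by (rule principal_minor_insert_cofactor[OF fin aS])
  also have "(\<Sum>p\<in>?P. of_int (sign p) * (\<Sum>i\<in>S. f a (p i) * f i a * (\<Prod>x\<in>S - {i}. f x (p x))))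
      = (\<Sum>p\<in>?P. \<Sum>i\<in>S. ?u i p)"
  proof (rule sum.cong[OF refl])
    fix p assume "p \<in> ?P"
    then show "of_int (sign p) * (\<Sum>i\<in>S. f a (p i) * f i a * (\<Prod>x\<in>S - {i}. f x (p x)))
        = (\<Sum>i\<in>S. ?u i p)"
      using cofactor_sum_eq_fixed_points[where f = f and a = a and c = c and g = g, OF _ fin cauchy]
      by (simp add: sum_distrib_left) (rule sum.cong; simp add: ac_simps)
  qed
  also have "\<dots> = (\<Sum>i\<in>S. \<Sum>p\<in>?P. ?u i p)" by (rule sum.swap)
  also have "\<dots> = (\<Sum>i\<in>S. f a i * f i a * principal_minor f (S - {i}))"
  proof (rule sum.cong[OF refl])
    fix i assume i: "i \<in> S"
    have "{p \<in> ?P. p i = i} = {p. p permutes (S - {i})}"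
      using permutes_iff_fixing_complement[of "S - {i}" S] i by auto
    then show "(\<Sum>p\<in>?P. ?u i p) = f a i * f i a * principal_minor f (S - {i})"
      unfolding principal_minor_def sum_distrib_left
        sum.inter_filter[OF finite_permutations[OF fin], symmetric] by simp
  qed
  finally show ?thesis .
qed

definition matching_weight :: "(nat \<Rightarrow> nat \<Rightarrow> 'a::comm_ring_1) \<Rightarrow> nat set \<Rightarrow> (nat \<Rightarrow> nat) \<Rightarrow> 'a"
  where "matching_weight f S \<pi> =
    (\<Prod>i\<in>{i\<in>S. \<pi> i = i}. f i i) * (\<Prod>i\<in>{i\<in>S. i < \<pi> i}. - (f i (\<pi> i) * f (\<pi> i) i))"

definition matching_sum :: "(nat \<Rightarrow> nat \<Rightarrow> 'a::comm_ring_1) \<Rightarrow> nat set \<Rightarrow> 'a" where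
  "matching_sum f S = (\<Sum>\<pi>\<in>matchings S. matching_weight f S \<pi>)"

lemma matchingsI:
  assumes "\<And>x. x \<in> S \<Longrightarrow> \<pi> x \<in> S" and "\<And>x. \<pi> (\<pi> x) = x" and "\<And>x. x \<notin> S \<Longrightarrow> \<pi> x = x"
  shows "\<pi> \<in> matchings S"
  using assms unfolding matchings_def by auto

lemma matchings_closed: "\<pi> \<in> matchings S \<Longrightarrow> x \<in> S \<Longrightarrow> \<pi> x \<in> S"
  by (simp add: matchings_def)

lemma matchings_fixes_outside: "\<pi> \<in> matchings S \<Longrightarrow> x \<notin> S \<Longrightarrow> \<pi> x = x"
  by (simp add: matchings_def)

lemma matchings_involutive: "\<pi> \<in> matchings S \<Longrightarrow> \<pi> (\<pi> x) = x"
  by (cases "x \<in> S") (simp_all add: matchings_def)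

lemma matchings_permutes: "\<pi> \<in> matchings S \<Longrightarrow> \<pi> permutes S"
  by (intro bij_imp_permutes bij_betw_byWitness[where f' = \<pi>])
    (auto simp: matchings_closed matchings_involutive matchings_fixes_outside)

lemma finite_matchings: "finite S \<Longrightarrow> finite (matchings S)"
  by (rule finite_subset[OF _ finite_permutations]) (auto dest: matchings_permutes)

lemma matchings_empty: "matchings {} = {id}"
  unfolding matchings_def by (auto simp: fun_eq_iff)

lemma matching_sum_empty [simp]: "matching_sum f {} = 1"
  unfolding matching_sum_def matchings_empty matching_weight_def by simp

lemma matchings_insert_fixing:
  "a \<notin> S \<Longrightarrow> {\<pi> \<in> matchings (insert a S). \<pi> a = a} = matchings S"
  unfolding matchings_def by auto

lemma matching_weight_insert_fixing:
  assumes fin: "finite S" and aS: "a \<notin> S" and \<pi>: "\<pi> \<in> matchings S"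
  shows "matching_weight f (insert a S) \<pi> = f a a * matching_weight f S \<pi>"
proof -
  have "\<pi> a = a" using matchings_fixes_outside[OF \<pi> aS] .
  then have "{i\<in>insert a S. \<pi> i = i} = insert a {i\<in>S. \<pi> i = i}"
    and "{i\<in>insert a S. i < \<pi> i} = {i\<in>S. i < \<pi> i}" by auto
  then show ?thesis unfolding matching_weight_def using fin aS by (simp add: ac_simps)
qed

lemma matchings_insert_pair:
  assumes \<pi>: "\<pi> \<in> matchings (S - {i})" and aS: "a \<notin> S" and i: "i \<in> S"
  shows "\<pi>(i := a, a := i) \<in> matchings (insert a S)"
proof (rule matchingsI)
  have moved: "\<pi> x \<notin> {a, i}" if "x \<notin> {a, i}" for x
    using matchings_closed[OF \<pi>, of x] matchings_fixes_outside[OF \<pi>, of x] that aS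
    by (cases "x \<in> S - {i}") auto
  fix x
  show "x \<in> insert a S \<Longrightarrow> (\<pi>(i := a, a := i)) x \<in> insert a S"
    using matchings_closed[OF \<pi>, of x] i by auto
  show "(\<pi>(i := a, a := i)) ((\<pi>(i := a, a := i)) x) = x"
    using moved[of x] matchings_involutive[OF \<pi>, of x] aS i by auto
  show "x \<notin> insert a S \<Longrightarrow> (\<pi>(i := a, a := i)) x = x"
    using matchings_fixes_outside[OF \<pi>, of x] i by auto
qed

lemma matchings_remove_pair:
  assumes \<pi>: "\<pi> \<in> matchings (insert a S)" and \<pi>a: "\<pi> a = i" and aS: "a \<notin> S" and i: "i \<in> S"
  shows "\<pi>(i := i, a := a) \<in> matchings (S - {i})"
proof (rule matchingsI)
  have \<pi>i: "\<pi> i = a" using matchings_involutive[OF \<pi>, of a] \<pi>a by simp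
  have moved: "\<pi> x \<notin> {a, i}" if "x \<notin> {a, i}" for x
    using matchings_involutive[OF \<pi>, of x] that \<pi>a \<pi>i by auto
  fix x
  show "x \<in> S - {i} \<Longrightarrow> (\<pi>(i := i, a := a)) x \<in> S - {i}"
    using moved[of x] matchings_closed[OF \<pi>, of x] aS by auto
  show "(\<pi>(i := i, a := a)) ((\<pi>(i := i, a := a)) x) = x"
    using moved[of x] matchings_involutive[OF \<pi>, of x] by auto
  show "x \<notin> S - {i} \<Longrightarrow> (\<pi>(i := i, a := a)) x = x"
    using matchings_fixes_outside[OF \<pi>, of x] by auto
qed

lemma matchings_insert_pairing:
  assumes aS: "a \<notin> S" and i: "i \<in> S"
  shows "bij_betw (\<lambda>\<pi>. \<pi>(i := a, a := i)) (matchings (S - {i}))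
           {\<pi> \<in> matchings (insert a S). \<pi> a = i}"
proof (rule bij_betw_byWitness[where f' = "\<lambda>\<pi>. \<pi>(i := i, a := a)"])
  show "\<forall>\<pi>\<in>matchings (S - {i}). (\<pi>(i := a, a := i))(i := i, a := a) = \<pi>"
  proof
    fix \<pi> assume \<pi>: "\<pi> \<in> matchings (S - {i})"
    have "\<pi> i = i" "\<pi> a = a" using matchings_fixes_outside[OF \<pi>] aS by auto
    then show "(\<pi>(i := a, a := i))(i := i, a := a) = \<pi>" by (auto simp: fun_eq_iff)
  qed
  show "\<forall>\<pi>\<in>{\<pi> \<in> matchings (insert a S). \<pi> a = i}. (\<pi>(i := i, a := a))(i := a, a := i) = \<pi>"
  proof
    fix \<pi> assume \<pi>: "\<pi> \<in> {\<pi> \<in> matchings (insert a S). \<pi> a = i}"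
    then have "\<pi> i = a" using matchings_involutive[of \<pi> _ a] by auto
    with \<pi> show "(\<pi>(i := i, a := a))(i := a, a := i) = \<pi>" by (auto simp: fun_eq_iff)
  qed
  show "(\<lambda>\<pi>. \<pi>(i := a, a := i)) ` matchings (S - {i}) \<subseteq> {\<pi> \<in> matchings (insert a S). \<pi> a = i}"
    using matchings_insert_pair[OF _ aS i] by auto
  show "(\<lambda>\<pi>. \<pi>(i := i, a := a)) ` {\<pi> \<in> matchings (insert a S). \<pi> a = i} \<subseteq> matchings (S - {i})"
    using matchings_remove_pair[OF _ _ aS i] by auto
qed

lemma matching_weight_insert_pairing:
  fixes f :: "nat \<Rightarrow> nat \<Rightarrow> 'a::comm_ring_1"
  assumes fin: "finite S" and aS: "a \<notin> S" and i: "i \<in> S" and \<pi>: "\<pi> \<in> matchings (S - {i})"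
  shows "matching_weight f (insert a S) (\<pi>(i := a, a := i)) =
    - (f a i * f i a) * matching_weight f (S - {i}) \<pi>"
proof -
  let ?\<sigma> = "\<pi>(i := a, a := i)"
  have ai: "a \<noteq> i" using i aS by auto
  have fixed: "{x\<in>insert a S. ?\<sigma> x = x} = {x\<in>S - {i}. \<pi> x = x}"
    using ai aS by auto
  have lower: "{x\<in>insert a S. x < ?\<sigma> x} = insert (min a i) {x\<in>S - {i}. x < \<pi> x}"
    using ai i aS by (auto simp: min_def)
  have fin': "finite {x\<in>S - {i}. x < \<pi> x}" using fin by simp
  have new: "min a i \<notin> {x\<in>S - {i}. x < \<pi> x}" using aS by (auto simp: min_def)
  have pair: "- (f (min a i) (?\<sigma> (min a i)) * f (?\<sigma> (min a i)) (min a i)) = - (f a i * f i a)"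
    using ai by (cases "a < i") (auto simp: min_def mult.commute)
  have rest: "(\<Prod>x\<in>{x\<in>S - {i}. x < \<pi> x}. - (f x (?\<sigma> x) * f (?\<sigma> x) x)) =
      (\<Prod>x\<in>{x\<in>S - {i}. x < \<pi> x}. - (f x (\<pi> x) * f (\<pi> x) x))"
  proof (rule prod.cong[OF refl])
    fix x assume "x \<in> {x\<in>S - {i}. x < \<pi> x}"
    then have "x \<in> S - {i}" "\<pi> x \<in> S - {i}" using matchings_closed[OF \<pi>] by auto
    then show "- (f x (?\<sigma> x) * f (?\<sigma> x) x) = - (f x (\<pi> x) * f (\<pi> x) x)" using aS by auto
  qed
  show ?thesis
    unfolding matching_weight_def fixed lower prod.insert[OF fin' new] pair rest
    by (simp add: ac_simps)
qed

lemma matching_sum_insert: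
  fixes f :: "nat \<Rightarrow> nat \<Rightarrow> 'a::comm_ring_1"
  assumes fin: "finite S" and aS: "a \<notin> S"
  shows "matching_sum f (insert a S) =
    f a a * matching_sum f S - (\<Sum>i\<in>S. f a i * f i a * matching_sum f (S - {i}))"
proof -
  let ?M = "matchings (insert a S)"
  let ?w = "matching_weight f (insert a S)"
  have pairing: "(\<Sum>\<pi>\<in>{\<pi> \<in> ?M. \<pi> a = i}. ?w \<pi>) = - (f a i * f i a * matching_sum f (S - {i}))"
    if i: "i \<in> S" for i
  proof -
    have "(\<Sum>\<pi>\<in>{\<pi> \<in> ?M. \<pi> a = i}. ?w \<pi>) = (\<Sum>\<pi>\<in>matchings (S - {i}). ?w (\<pi>(i := a, a := i)))"
      using sum.reindex_bij_betw[OF matchings_insert_pairing[OF aS i], of ?w] by simp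
    also have "\<dots> = - (f a i * f i a * matching_sum f (S - {i}))"
      unfolding matching_sum_def sum_distrib_left sum_negf[symmetric]
      by (intro sum.cong refl) (simp add: matching_weight_insert_pairing[OF fin aS i])
    finally show ?thesis .
  qed
  have "matching_sum f (insert a S) = (\<Sum>b\<in>insert a S. \<Sum>\<pi>\<in>{\<pi> \<in> ?M. \<pi> a = b}. ?w \<pi>)"
    unfolding matching_sum_def
    by (rule sum.group[symmetric, OF finite_matchings]) (use fin in \<open>auto simp: matchings_def\<close>)
  also have "\<dots> = (\<Sum>\<pi>\<in>matchings S. ?w \<pi>) + (\<Sum>i\<in>S. \<Sum>\<pi>\<in>{\<pi> \<in> ?M. \<pi> a = i}. ?w \<pi>)"
    using fin aS by (simp add: matchings_insert_fixing)
  also have "(\<Sum>\<pi>\<in>matchings S. ?w \<pi>) = f a a * matching_sum f S"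
    unfolding matching_sum_def sum_distrib_left
    by (intro sum.cong refl matching_weight_insert_fixing[OF fin aS])
  finally show ?thesis by (simp add: pairing sum_negf)
qed

lemma principal_minor_eq_matching_sum:
  fixes f :: "nat \<Rightarrow> nat \<Rightarrow> 'a::comm_ring_1"
  assumes "finite S"
    and "\<And>a i j. a \<in> S \<Longrightarrow> i \<in> S \<Longrightarrow> j \<in> S \<Longrightarrow> i \<noteq> a \<Longrightarrow> j \<noteq> a \<Longrightarrow> i \<noteq> j \<Longrightarrow>
           f i a * f a j = f i j * (c a * (g a i - g a j))"
  shows "principal_minor f S = matching_sum f S"
  using assms
proof (induction S rule: finite_psubset_induct)
  case (psubset S)
  show ?case
  proof (cases "S = {}")
    case True
    then show ?thesis by simp
  next
    case False
    then obtain a where a: "a \<in> S" by auto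
    define T where "T = S - {a}"
    have S: "S = insert a T" and aT: "a \<notin> T" and fin: "finite T"
      using a psubset.hyps unfolding T_def by auto
    have IH: "principal_minor f B = matching_sum f B" if "B \<subseteq> T" for B
      using psubset.IH[of B] psubset.prems that a unfolding T_def by blast
    have "principal_minor f S =
        f a a * principal_minor f T - (\<Sum>i\<in>T. f a i * f i a * principal_minor f (T - {i}))"
      unfolding S using psubset.prems a aT
      by (intro principal_minor_insert[where c = "c a" and g = "g a", OF fin aT]) (auto simp: S)
    also have "\<dots> = matching_sum f S"
      unfolding S matching_sum_insert[OF fin aT] by (simp add: IH)
    finally show ?thesis .
  qed
qed

lemma prod_if_fixed_point:
  assumes "finite B"
  shows "(\<Prod>i\<in>B. if i = p i then c else 0) = (if \<forall>i\<in>B. p i = i then c ^ card B else (0::'a::comm_semiring_1))"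
  using assms by (induction B rule: finite_induct) auto

lemma signof_prod_add_X_diagonal:
  fixes f :: "nat \<Rightarrow> nat \<Rightarrow> 'a::comm_ring_1"
  assumes fin: "finite A"
  shows "signof p * (\<Prod>i\<in>A. [:f i (p i):] + (if i = p i then [:0, 1:] else 0)) =
    (\<Sum>X\<in>Pow A. if \<forall>i\<in>A - X. p i = i
       then monom (of_int (sign p) * (\<Prod>i\<in>X. f i (p i))) (card A - card X) else 0)"
proof -
  have "signof p * (\<Prod>i\<in>A. [:f i (p i):] + (if i = p i then [:0, 1:] else 0)) =
      (\<Sum>X\<in>Pow A. signof p * ((\<Prod>i\<in>X. [:f i (p i):]) *
         (\<Prod>i\<in>A - X. if i = p i then [:0, 1:] else 0)))"
    using fin by (simp add: prod_add sum_distrib_left)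
  also have "\<dots> = (\<Sum>X\<in>Pow A. if \<forall>i\<in>A - X. p i = i
       then monom (of_int (sign p) * (\<Prod>i\<in>X. f i (p i))) (card A - card X) else 0)"
  proof (rule sum.cong[OF refl])
    fix X assume "X \<in> Pow A"
    then have "card (A - X) = card A - card X" using fin by (simp add: card_Diff_subset finite_subset)
    then show "signof p * ((\<Prod>i\<in>X. [:f i (p i):]) * (\<Prod>i\<in>A - X. if i = p i then [:0, 1:] else 0)) =
        (if \<forall>i\<in>A - X. p i = i
         then monom (of_int (sign p) * (\<Prod>i\<in>X. f i (p i))) (card A - card X) else 0)"
      using fin
      by (simp add: prod_if_fixed_point prod_to_poly of_int_poly monom_altdef mult_to_poly ac_simps)
  qed
  finally show ?thesis .
qed

lemma det_add_X_diagonal: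
  fixes f :: "nat \<Rightarrow> nat \<Rightarrow> 'a::comm_ring_1"
  shows "det (mat n n (\<lambda>(i, j). (if i = j then [:0, 1:] else 0) + [:f i j:])) =
    (\<Sum>X\<in>Pow {0..<n}. monom (principal_minor f X) (n - card X))"
proof -
  let ?A = "{0..<n}"
  let ?P = "{p. p permutes ?A}"
  let ?t = "\<lambda>X p. if \<forall>i\<in>?A - X. p i = i
       then monom (of_int (sign p) * (\<Prod>i\<in>X. f i (p i))) (n - card X) else 0"
  have "det (mat n n (\<lambda>(i, j). (if i = j then [:0, 1:] else 0) + [:f i j:])) =
      (\<Sum>p\<in>?P. signof p * (\<Prod>i\<in>?A. [:f i (p i):] + (if i = p i then [:0, 1:] else 0)))"
    by (subst det_def'[where n = n])
      (auto intro!: sum.cong arg_cong2[where f = "(*)"] prod.cong simp: permutes_in_image add.commute)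
  also have "\<dots> = (\<Sum>p\<in>?P. \<Sum>X\<in>Pow ?A. ?t X p)"
    by (intro sum.cong refl) (simp add: signof_prod_add_X_diagonal cong: if_cong)
  also have "\<dots> = (\<Sum>X\<in>Pow ?A. \<Sum>p\<in>?P. ?t X p)"
    by (rule sum.swap)
  also have "\<dots> = (\<Sum>X\<in>Pow ?A. monom (principal_minor f X) (n - card X))"
  proof (rule sum.cong[OF refl])
    fix X assume X: "X \<in> Pow ?A"
    have "{p \<in> ?P. \<forall>i\<in>?A - X. p i = i} = {p. p permutes X}"
      using permutes_iff_fixing_complement[of X ?A] X by auto
    then show "(\<Sum>p\<in>?P. ?t X p) = monom (principal_minor f X) (n - card X)"
      unfolding principal_minor_def monom_sum
        sum.inter_filter[OF finite_permutations[OF finite_atLeastLessThan], symmetric] by simp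
  qed
  finally show ?thesis .
qed

lemma coeff_det_add_X_diagonal:
  fixes f :: "nat \<Rightarrow> nat \<Rightarrow> 'a::comm_ring_1"
  assumes "k \<le> n"
  shows "coeff (det (mat n n (\<lambda>(i, j). (if i = j then [:0, 1:] else 0) + [:f i j:]))) (n - k) =
    (\<Sum>K\<in>{K. K \<subseteq> {..<n} \<and> card K = k}. principal_minor f K)"
proof -
  have "{X \<in> Pow {0..<n}. n - card X = n - k} = {K. K \<subseteq> {..<n} \<and> card K = k}"
  proof -
    have "n - card X = n - k \<longleftrightarrow> card X = k" if "X \<subseteq> {..<n}" for X
      using card_mono[OF finite_lessThan that] assms by auto
    then show ?thesis by (auto simp: atLeast0LessThan)
  qed
  then show ?thesis
    unfolding det_add_X_diagonal coeff_sum coeff_monom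
    by (simp add: sum.inter_filter[symmetric])
qed

lemma rinv_eq: "x * y = 1 \<Longrightarrow> rinv x = y"
  unfolding rinv_def
proof (rule the_equality)
  fix z assume "x * y = 1" and "x * z = 1"
  then show "z = y" by (metis mult.commute mult.left_commute mult_1_right)
qed

lemma unit_mult_rinv: "x dvd 1 \<Longrightarrow> x * rinv x = 1"
  by (metis dvdE rinv_eq)

lemma rinv_minus: "x dvd 1 \<Longrightarrow> rinv (- x) = - rinv x"
  by (rule rinv_eq) (simp add: unit_mult_rinv)

lemma rinv_power: "x dvd 1 \<Longrightarrow> rinv (x ^ m) = rinv x ^ m"
  by (rule rinv_eq) (simp add: power_mult_distrib[symmetric] unit_mult_rinv)

lemma
  fixes x y :: "'a::comm_ring_1"
  assumes x: "x dvd 1" and d: "(1 - y * rinv x) dvd 1"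
  shows unit_diff_of_unit_ratio: "(x - y) dvd 1"
    and rinv_one_minus_ratio: "rinv (1 - y * rinv x) = x * rinv (x - y)"
proof -
  have "(1 - y * rinv x) * x = x - y * (x * rinv x)" by (simp add: algebra_simps)
  then have factor: "x - y = (1 - y * rinv x) * x" using unit_mult_rinv[OF x] by simp
  then show unit: "(x - y) dvd 1" using x d by simp
  have "(1 - y * rinv x) * (x * rinv (x - y)) = (x - y) * rinv (x - y)"
    unfolding factor by (simp only: ac_simps)
  then show "rinv (1 - y * rinv x) = x * rinv (x - y)"
    using unit_mult_rinv[OF unit] by (intro rinv_eq) simp
qed

lemma partial_fraction:
  fixes x y z u v w :: "'a::comm_ring_1"
  assumes u: "(y - x) * u = 1" and v: "(z - y) * v = 1" and w: "(z - x) * w = 1"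
  shows "u * v = w * (u + v)"
proof -
  have "u * v = u * v * ((z - x) * w)" using w by simp
  also have "\<dots> = w * (((z - y) * v) * u + ((y - x) * u) * v)" by (simp add: algebra_simps)
  finally show ?thesis using u v by simp
qed

lemma Mchi_diag: "i < n \<Longrightarrow> Mchi n hbar q chi $$ (i, i) = chi i"
  by (simp add: Mchi_def)

lemma Mchi_offdiag:
  assumes "i < n" "j < n" "i \<noteq> j" "q j dvd 1" "(1 - q i * rinv (q j)) dvd 1"
  shows "Mchi n hbar q chi $$ (i, j) = hbar * q j * rinv (q j - q i)"
  using assms by (simp add: Mchi_def rinv_one_minus_ratio)

context
  fixes U :: "nat set" and f :: "nat \<Rightarrow> nat \<Rightarrow> 'a::comm_ring_1" and h :: 'a and q :: "nat \<Rightarrow> 'a"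
  assumes units: "\<And>i j. i \<in> U \<Longrightarrow> j \<in> U \<Longrightarrow> i \<noteq> j \<Longrightarrow> (q j - q i) dvd 1"
    and offdiag: "\<And>i j. i \<in> U \<Longrightarrow> j \<in> U \<Longrightarrow> i \<noteq> j \<Longrightarrow> f i j = h * q j * rinv (q j - q i)"
begin

lemma rinv_diff_swap:
  assumes "i \<in> U" "j \<in> U" "i \<noteq> j"
  shows "rinv (q i - q j) = - rinv (q j - q i)"
proof -
  have "rinv (q i - q j) = rinv (- (q j - q i))" by simp
  also have "\<dots> = - rinv (q j - q i)" by (rule rinv_minus[OF units[OF assms]])
  finally show ?thesis .
qed

lemma cauchy_like_product:
  assumes a: "a \<in> U" and i: "i \<in> U" and j: "j \<in> U" and "i \<noteq> a" "j \<noteq> a" "i \<noteq> j"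
  shows "f i a * f a j = f i j * (h * q a * (rinv (q a - q i) - rinv (q a - q j)))"
proof -
  let ?u = "rinv (q a - q i)" and ?v = "rinv (q j - q a)" and ?w = "rinv (q j - q i)"
  have "?u * ?v = ?w * (?u + ?v)"
    by (rule partial_fraction[where x = "q i" and y = "q a" and z = "q j"])
      (use assms in \<open>simp_all add: unit_mult_rinv units\<close>)
  moreover have "rinv (q a - q j) = - ?v" using rinv_diff_swap[OF a j] assms by simp
  ultimately show ?thesis using assms by (simp add: offdiag algebra_simps)
qed

lemma neg_product_transposed_entries:
  assumes i: "i \<in> U" and j: "j \<in> U" and ij: "i \<noteq> j"
  shows "- (f i j * f j i) = h^2 * q i * q j * rinv ((q i - q j)^2)"
proof -
  have "rinv ((q i - q j)^2) = rinv (q i - q j)^2"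
    using rinv_power[OF units[OF j i ij[symmetric]]] .
  then show ?thesis
    unfolding offdiag[OF i j ij] offdiag[OF j i ij[symmetric]] rinv_diff_swap[OF i j ij]
    by (simp add: power2_eq_square algebra_simps)
qed

lemma matching_weight_eq_Jw_Vw:
  assumes diag: "\<And>i. i \<in> U \<Longrightarrow> f i i = chi i"
    and K: "K \<subseteq> U" and \<pi>: "\<pi> \<in> matchings K"
  shows "matching_weight f K \<pi> = Jw chi K \<pi> * Vw h q K \<pi>"
proof -
  have "(\<Prod>i\<in>{i\<in>K. i < \<pi> i}. - (f i (\<pi> i) * f (\<pi> i) i)) = Vw h q K \<pi>"
    unfolding Vw_def
  proof (rule prod.cong[OF refl])
    fix i assume "i \<in> {i\<in>K. i < \<pi> i}"
    then have "i \<in> U" "\<pi> i \<in> U" "i \<noteq> \<pi> i" using K matchings_closed[OF \<pi>] by auto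
    then show "- (f i (\<pi> i) * f (\<pi> i) i) = h^2 * q i * q (\<pi> i) * rinv ((q i - q (\<pi> i))^2)"
      by (rule neg_product_transposed_entries)
  qed
  moreover have "(\<Prod>i\<in>{i\<in>K. \<pi> i = i}. f i i) = Jw chi K \<pi>"
    unfolding Jw_def using K diag by (intro prod.cong refl) auto
  ultimately show ?thesis unfolding matching_weight_def by (simp only:)
qed

end

theorem mainTheorem14:
  fixes n k :: nat and hbar :: "'a::comm_ring_1" and q chi :: "nat \<Rightarrow> 'a"
  assumes "\<And>j. j < n \<Longrightarrow> q j dvd 1"
    and "\<And>i j. i < n \<Longrightarrow> j < n \<Longrightarrow> i \<noteq> j \<Longrightarrow> (1 - q i * rinv (q j)) dvd 1"
    and "1 \<le> k" and "k \<le> n"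
  shows "Ecoef n hbar q chi k =
    (\<Sum>K\<in>{K. K \<subseteq> {..<n} \<and> card K = k}. \<Sum>\<pi>\<in>matchings K. Jw chi K \<pi> * Vw hbar q K \<pi>)"
proof -
  define M where "M i j = Mchi n hbar q chi $$ (i, j)" for i j
  let ?Ks = "{K. K \<subseteq> {..<n} \<and> card K = k}"
  have units: "(q j - q i) dvd 1" if "i \<in> {..<n}" "j \<in> {..<n}" "i \<noteq> j" for i j
  proof -
    have "q j dvd 1" "(1 - q i * rinv (q j)) dvd 1" using that assms(1,2) by auto
    then show ?thesis by (rule unit_diff_of_unit_ratio)
  qed
  have offdiag: "M i j = hbar * q j * rinv (q j - q i)" if "i \<in> {..<n}" "j \<in> {..<n}" "i \<noteq> j" for i j
    unfolding M_def using that by (intro Mchi_offdiag assms(1,2)) auto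
  have diag: "M i i = chi i" if "i \<in> {..<n}" for i
    unfolding M_def using that by (simp add: Mchi_diag)
  have "Ecoef n hbar q chi k = (\<Sum>K\<in>?Ks. principal_minor M K)"
    unfolding Ecoef_def detpoly_def M_def by (rule coeff_det_add_X_diagonal[OF assms(4)])
  also have "\<dots> = (\<Sum>K\<in>?Ks. matching_sum M K)"
    by (intro sum.cong refl
          principal_minor_eq_matching_sum[where c = "\<lambda>a. hbar * q a" and g = "\<lambda>a i. rinv (q a - q i)"]
          cauchy_like_product[where U = "{..<n}" and f = M, OF units offdiag])
      (auto intro: finite_subset)
  also have "\<dots> = (\<Sum>K\<in>?Ks. \<Sum>\<pi>\<in>matchings K. Jw chi K \<pi> * Vw hbar q K \<pi>)"
    unfolding matching_sum_def
    by (intro sum.cong refl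
          matching_weight_eq_Jw_Vw[where U = "{..<n}" and f = M, OF units offdiag diag]) auto
  finally show ?thesis .
qed

end
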